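(* Let $\phi:\mathbb{R}^d\to\mathbb{R}$ be differentiable and suppose there exist constants $0<m\le M$ such that $$m\|x-y\|^2\le [\nabla\phi(x)-\nabla\phi(y)]^T(x-y)\le M\|x-y\|^2\quad\text{for all }x,y\in\mathbb{R}^d.$$ Let $g:\mathbb{R}^d\to\mathbb{R}^d$ be a map with $\|\nabla\phi(x)-g(x)\|\le\epsilon_g$ for all $x\in\mathbb{R}^d$, and let $f:\mathbb{R}^d\to\mathbb{R}$ satisfy $|\phi(x)-f(x)|\le\epsilon_f$ for all $x$, where $\epsilon_g>0$ and $\epsilon_f\ge 0$. Let $x_k\in\mathbb{R}^d$ and let $s_k\in\mathbb{R}^d$, $s_k\neq 0$, be chosen such that $$s_k^T\left[g(x_k+s_k)-g(x_k)\right]\ge c\,\epsilon_g\|s_k\|$$ for some constant $c>2$. Setting $y_k=g(x_k+s_k)-g(x_k)$, we have $$\frac{s_k^Ty_k}{s_k^Ts_k}\ge\frac{c}{c+2}\,m,\qquad \frac{y_k^Ty_k}{s_k^Ty_k}\le\frac{c}{c-2}\,M.$$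
   Context: $\|\cdot\|$ denotes the Euclidean norm. Here $f$ and $g$ model noisy observations of $\phi$ and $\nabla\phi$. *)

theory Defs
  imports "HOL-Analysis.Analysis"
begin

end

theory Submission
  imports Defs
begin

(* Let z = grad (x + s) - grad x, so that the measured difference y = g (x + s) - g x satisfies
   norm (y - z) <= 2 eps_g. Strong monotonicity gives s.z >= m |s|^2, and the curvature condition
   s.y >= c eps_g |s| makes the noise term 2 eps_g |s| at most (2/c) s.y; this yields the first bound.
   For the second, convexity and M-smoothness give cocoercivity |z|^2 <= M s.z (Baillon-Haddad),
   i.e. z lies in the ball of radius M|s|/2 about (M/2) s. Hence y lies in that ball enlarged by
   2 eps_g, and expanding |y - (M/2) s|^2 bounds y.y by M s.y plus noise terms which the curvature
   condition again absorbs. *)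

lemma has_real_derivative_along_line:
  fixes \<phi> :: "'a::real_inner \<Rightarrow> real" and grad :: "'a \<Rightarrow> 'a"
  assumes grad: "\<And>x. (\<phi> has_derivative (\<lambda>h. grad x \<bullet> h)) (at x)"
  shows "((\<lambda>t. \<phi> (x + t *\<^sub>R d)) has_real_derivative grad (x + t *\<^sub>R d) \<bullet> d) (at t)"
proof -
  have "((\<lambda>t. x + t *\<^sub>R d) has_derivative (\<lambda>h. h *\<^sub>R d)) (at t)"
    by (auto intro!: derivative_eq_intros)
  from has_derivative_compose[OF this grad]
  have "((\<lambda>t. \<phi> (x + t *\<^sub>R d)) has_derivative (\<lambda>h. grad (x + t *\<^sub>R d) \<bullet> (h *\<^sub>R d))) (at t)" .
  then show ?thesis
    by (simp add: has_field_derivative_def mult.commute[of _ "grad (x + t *\<^sub>R d) \<bullet> d"])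
qed

lemma gradient_quadratic_upper_bound:
  fixes \<phi> :: "'a::real_inner \<Rightarrow> real" and grad :: "'a \<Rightarrow> 'a"
  assumes grad: "\<And>x. (\<phi> has_derivative (\<lambda>h. grad x \<bullet> h)) (at x)"
    and upper: "\<And>x y. (grad x - grad y) \<bullet> (x - y) \<le> K * (norm (x - y))\<^sup>2"
  shows "\<phi> y \<le> \<phi> x + grad x \<bullet> (y - x) + K / 2 * (norm (y - x))\<^sup>2"
proof -
  define d where "d = y - x"
  define k where "k t = \<phi> (x + t *\<^sub>R d) - t * (grad x \<bullet> d) - K / 2 * t\<^sup>2 * (norm d)\<^sup>2" for t
  have "k 1 \<le> k 0"
  proof (rule DERIV_nonpos_imp_nonincreasing[where f = k])
    fix t :: real
    assume "0 \<le> t" "t \<le> 1"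
    have deriv: "(k has_real_derivative grad (x + t *\<^sub>R d) \<bullet> d - grad x \<bullet> d - K * t * (norm d)\<^sup>2) (at t)"
      unfolding k_def
      by (rule derivative_eq_intros has_real_derivative_along_line[OF grad] | simp)+
    have "t * ((grad (x + t *\<^sub>R d) - grad x) \<bullet> d) \<le> t * (K * t * (norm d)\<^sup>2)"
      using upper[of "x + t *\<^sub>R d" x] by (simp add: power2_eq_square algebra_simps)
    then have "grad (x + t *\<^sub>R d) \<bullet> d - grad x \<bullet> d - K * t * (norm d)\<^sup>2 \<le> 0"
      using \<open>0 \<le> t\<close> by (cases "t = 0") (auto simp: mult_le_cancel_left inner_diff_left)
    with deriv show "\<exists>D. (k has_real_derivative D) (at t) \<and> D \<le> 0"
      by blast
  qed simp
  then show ?thesis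
    by (simp add: k_def d_def)
qed

lemma gradient_quadratic_lower_bound:
  fixes \<phi> :: "'a::real_inner \<Rightarrow> real" and grad :: "'a \<Rightarrow> 'a"
  assumes grad: "\<And>x. (\<phi> has_derivative (\<lambda>h. grad x \<bullet> h)) (at x)"
    and lower: "\<And>x y. K * (norm (x - y))\<^sup>2 \<le> (grad x - grad y) \<bullet> (x - y)"
  shows "\<phi> x + grad x \<bullet> (y - x) + K / 2 * (norm (y - x))\<^sup>2 \<le> \<phi> y"
proof -
  have "((\<lambda>x. - \<phi> x) has_derivative (\<lambda>h. - grad x \<bullet> h)) (at x)" for x
    using has_derivative_minus[OF grad[of x]] by simp
  moreover have "(- grad x - - grad y) \<bullet> (x - y) \<le> - K * (norm (x - y))\<^sup>2" for x y
    using lower[of x y] by (simp add: inner_diff_left)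
  ultimately have "- \<phi> y \<le> - \<phi> x + - grad x \<bullet> (y - x) + - K / 2 * (norm (y - x))\<^sup>2"
    by (rule gradient_quadratic_upper_bound)
  then show ?thesis
    by simp
qed

lemma convex_smooth_gradient_gap:
  fixes \<phi> :: "'a::real_inner \<Rightarrow> real" and grad :: "'a \<Rightarrow> 'a"
  assumes grad: "\<And>x. (\<phi> has_derivative (\<lambda>h. grad x \<bullet> h)) (at x)"
    and mono: "\<And>x y. 0 \<le> (grad x - grad y) \<bullet> (x - y)"
    and smooth: "\<And>x y. (grad x - grad y) \<bullet> (x - y) \<le> M * (norm (x - y))\<^sup>2"
    and "0 < M"
  shows "\<phi> a + grad a \<bullet> (b - a) + (norm (grad b - grad a))\<^sup>2 / (2 * M) \<le> \<phi> b"
proof -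
  define w where "w = grad b - grad a"
  \<comment> \<open>the minimiser of the quadratic upper model at \<open>b\<close> of \<open>\<phi> - grad a \<bullet> _\<close>\<close>
  define u where "u = b - (1 / M) *\<^sub>R w"
  have "\<phi> a + grad a \<bullet> (u - a) \<le> \<phi> u"
    using gradient_quadratic_lower_bound[OF grad, of 0] mono by simp
  moreover have "\<phi> u \<le> \<phi> b + grad b \<bullet> (u - b) + M / 2 * (norm (u - b))\<^sup>2"
    by (rule gradient_quadratic_upper_bound[OF grad smooth])
  moreover have "grad a \<bullet> (u - a) = grad a \<bullet> (u - b) + grad a \<bullet> (b - a)"
    by (simp add: inner_diff_right)
  moreover have "w \<bullet> (u - b) + M / 2 * (norm (u - b))\<^sup>2 = - (norm w)\<^sup>2 / (2 * M)"
    using \<open>0 < M\<close> by (simp add: u_def dot_square_norm power2_eq_square field_simps)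
  ultimately show ?thesis
    by (simp add: w_def inner_diff_left)
qed

lemma gradient_cocoercive:
  fixes \<phi> :: "'a::real_inner \<Rightarrow> real" and grad :: "'a \<Rightarrow> 'a"
  assumes grad: "\<And>x. (\<phi> has_derivative (\<lambda>h. grad x \<bullet> h)) (at x)"
    and mono: "\<And>x y. 0 \<le> (grad x - grad y) \<bullet> (x - y)"
    and smooth: "\<And>x y. (grad x - grad y) \<bullet> (x - y) \<le> M * (norm (x - y))\<^sup>2"
    and "0 < M"
  shows "(norm (grad x - grad y))\<^sup>2 \<le> M * ((grad x - grad y) \<bullet> (x - y))"
proof -
  have "\<phi> y + grad y \<bullet> (x - y) + (norm (grad x - grad y))\<^sup>2 / (2 * M) \<le> \<phi> x"
    and "\<phi> x + grad x \<bullet> (y - x) + (norm (grad y - grad x))\<^sup>2 / (2 * M) \<le> \<phi> y"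
    using convex_smooth_gradient_gap[OF grad mono smooth \<open>0 < M\<close>] by blast+
  then have "(norm (grad x - grad y))\<^sup>2 / M \<le> (grad x - grad y) \<bullet> (x - y)"
    by (simp add: norm_minus_commute inner_diff_left inner_diff_right field_simps)
  with \<open>0 < M\<close> show ?thesis
    by (simp add: field_simps)
qed

lemma abs_inner_diff_le:
  fixes s y z :: "'a::real_inner"
  assumes "norm (y - z) \<le> r"
  shows "\<bar>s \<bullet> y - s \<bullet> z\<bar> \<le> norm s * r"
proof -
  have "\<bar>s \<bullet> (y - z)\<bar> \<le> norm s * norm (y - z)"
    by (rule Cauchy_Schwarz_ineq2)
  also have "\<dots> \<le> norm s * r"
    using assms by (simp add: mult_left_mono)
  finally show ?thesis
    by (simp add: inner_diff_right)
qed

lemma perturbed_secant_curvature_lower_bound: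
  fixes s y z :: "'a::real_inner"
  assumes "s \<noteq> 0" and "0 < c"
    and strong: "m * (norm s)\<^sup>2 \<le> s \<bullet> z"
    and noise: "norm (y - z) \<le> 2 * \<epsilon>"
    and curv: "c * \<epsilon> * norm s \<le> s \<bullet> y"
  shows "c / (c + 2) * m \<le> (s \<bullet> y) / (s \<bullet> s)"
proof -
  have "m * (norm s)\<^sup>2 \<le> s \<bullet> y + 2 * \<epsilon> * norm s"
    using strong abs_inner_diff_le[OF noise, of s] by (simp add: abs_le_iff algebra_simps)
  then have "c * (m * (norm s)\<^sup>2) \<le> c * (s \<bullet> y) + 2 * (c * \<epsilon> * norm s)"
    using mult_left_mono[of _ _ c] \<open>0 < c\<close> by (fastforce simp: algebra_simps)
  with curv have "c * m * (norm s)\<^sup>2 \<le> (c + 2) * (s \<bullet> y)"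
    by (simp add: algebra_simps)
  with \<open>s \<noteq> 0\<close> \<open>0 < c\<close> show ?thesis
    by (simp add: dot_square_norm field_simps)
qed

lemma cocoercive_in_cball:
  fixes s z :: "'a::real_inner"
  assumes coco: "(norm z)\<^sup>2 \<le> M * (s \<bullet> z)" and "0 \<le> M"
  shows "z \<in> cball ((M / 2) *\<^sub>R s) (M * norm s / 2)"
proof -
  have "(norm (z - (M / 2) *\<^sub>R s))\<^sup>2 = (norm z)\<^sup>2 - M * (s \<bullet> z) + (M / 2)\<^sup>2 * (norm s)\<^sup>2"
    unfolding power2_norm_eq_inner
    by (simp add: inner_diff_left inner_diff_right inner_commute power2_eq_square algebra_simps)
  also have "\<dots> \<le> (M * norm s / 2)\<^sup>2"
    using coco by (simp add: power_mult_distrib power_divide)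
  finally have "norm (z - (M / 2) *\<^sub>R s) \<le> M * norm s / 2"
    by (rule power2_le_imp_le) (use \<open>0 \<le> M\<close> in simp)
  then show ?thesis
    by (simp add: dist_norm norm_minus_commute)
qed

lemma perturbed_secant_ratio_upper_bound:
  fixes s y z :: "'a::real_inner"
  assumes "s \<noteq> 0" and "2 < c" and "0 < \<epsilon>" and "0 \<le> M"
    and coco: "(norm z)\<^sup>2 \<le> M * (s \<bullet> z)"
    and noise: "norm (y - z) \<le> 2 * \<epsilon>"
    and curv: "c * \<epsilon> * norm s \<le> s \<bullet> y"
  shows "(y \<bullet> y) / (s \<bullet> y) \<le> c / (c - 2) * M"
proof -
  define S where "S = norm s"
  define a where "a = s \<bullet> y"
  have "0 < S"
    using \<open>s \<noteq> 0\<close> by (simp add: S_def)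
  have "0 < c * \<epsilon> * S"
    using \<open>0 < S\<close> \<open>0 < \<epsilon>\<close> \<open>2 < c\<close> by simp
  with curv have "0 < a"
    by (simp add: a_def S_def)
  have a_near: "\<bar>a - s \<bullet> z\<bar> \<le> S * (2 * \<epsilon>)"
    using abs_inner_diff_le[OF noise] by (simp add: a_def S_def)
  have ball: "norm (z - (M / 2) *\<^sub>R s) \<le> M * S / 2"
    using cocoercive_in_cball[OF coco \<open>0 \<le> M\<close>] by (simp add: S_def dist_norm norm_minus_commute)
  then have "norm z \<le> M * S"
    using norm_triangle_sub[of z "(M / 2) *\<^sub>R s"] \<open>0 \<le> M\<close> by (simp add: S_def)
  then have "S * norm z \<le> S * (M * S)"
    using \<open>0 < S\<close> by simp
  then have "c * \<epsilon> * S \<le> (M * S + 2 * \<epsilon>) * S"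
    using curv a_near norm_cauchy_schwarz[of s z]
    by (simp add: a_def S_def abs_le_iff algebra_simps)
  then have "c * \<epsilon> \<le> M * S + 2 * \<epsilon>"
    using \<open>0 < S\<close> by (simp only: mult_le_cancel_right_pos)
  then have gap: "(c - 2) * \<epsilon> \<le> M * S"
    by (simp add: algebra_simps)
  from ball have "norm (y - (M / 2) *\<^sub>R s) \<le> M * S / 2 + 2 * \<epsilon>"
    using noise norm_triangle_ineq[of "z - (M / 2) *\<^sub>R s" "y - z"] by simp
  then have "(norm (y - (M / 2) *\<^sub>R s))\<^sup>2 \<le> (M * S / 2 + 2 * \<epsilon>)\<^sup>2"
    by (rule power_mono) simp
  moreover have "y \<bullet> y = (norm (y - (M / 2) *\<^sub>R s))\<^sup>2 + M * a - (M / 2)\<^sup>2 * (norm s)\<^sup>2"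
    unfolding a_def power2_norm_eq_inner
    by (simp add: inner_diff_left inner_diff_right inner_commute power2_eq_square algebra_simps)
  ultimately have "y \<bullet> y \<le> M * a + 2 * \<epsilon> * (M * S) + 4 * \<epsilon>\<^sup>2"
    by (simp add: S_def power2_eq_square algebra_simps)
  from mult_left_mono[OF this, of "c - 2"] \<open>2 < c\<close>
  have "(c - 2) * (y \<bullet> y) \<le> (c - 2) * (M * a) + 2 * \<epsilon> * (M * S) * (c - 2) + 4 * \<epsilon> * ((c - 2) * \<epsilon>)"
    by (simp add: power2_eq_square algebra_simps)
  also have "\<dots> \<le> (c - 2) * (M * a) + 2 * M * (c * \<epsilon> * S)"
    using mult_left_mono[OF gap, of "4 * \<epsilon>"] \<open>0 < \<epsilon>\<close> by (simp add: algebra_simps)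
  also have "\<dots> \<le> c * M * a"
    using mult_left_mono[OF curv, of "2 * M"] \<open>0 \<le> M\<close> by (simp add: a_def S_def algebra_simps)
  finally show ?thesis
    using \<open>0 < a\<close> \<open>2 < c\<close> by (simp add: a_def field_simps)
qed

theorem lemma3p1:
  fixes \<phi> :: "'a::euclidean_space \<Rightarrow> real"
    and grad g :: "'a \<Rightarrow> 'a"
    and f :: "'a \<Rightarrow> real"
    and m M \<epsilon>g \<epsilon>f c :: real
    and xk sk :: 'a
  assumes grad: "\<And>x. (\<phi> has_derivative (\<lambda>h. grad x \<bullet> h)) (at x)"
    and mpos: "0 < m" and mM: "m \<le> M"
    and strong: "\<And>x y. m * (norm (x - y))\<^sup>2 \<le> (grad x - grad y) \<bullet> (x - y)"
    and smooth: "\<And>x y. (grad x - grad y) \<bullet> (x - y) \<le> M * (norm (x - y))\<^sup>2"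
    and gerr: "\<And>x. norm (grad x - g x) \<le> \<epsilon>g"
    and ferr: "\<And>x. \<bar>\<phi> x - f x\<bar> \<le> \<epsilon>f"
    and epsg: "\<epsilon>g > 0" and epsf: "\<epsilon>f \<ge> 0"
    and sk: "sk \<noteq> 0"
    and c: "c > 2"
    and curv: "sk \<bullet> (g (xk + sk) - g xk) \<ge> c * \<epsilon>g * norm sk"
  shows "(let yk = g (xk + sk) - g xk in
           (sk \<bullet> yk) / (sk \<bullet> sk) \<ge> c / (c + 2) * m \<and>
           (yk \<bullet> yk) / (sk \<bullet> yk) \<le> c / (c - 2) * M)"
proof -
  define z where "z = grad (xk + sk) - grad xk"
  define y where "y = g (xk + sk) - g xk"
  have "0 < M"
    using mpos mM by simp
  have mono: "0 \<le> (grad u - grad v) \<bullet> (u - v)" for u v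
    using order_trans[OF _ strong[of u v]] mpos by simp
  have noise: "norm (y - z) \<le> 2 * \<epsilon>g"
    using norm_triangle_ineq4[of "grad xk - g xk" "grad (xk + sk) - g (xk + sk)"]
      gerr[of xk] gerr[of "xk + sk"]
    by (simp add: y_def z_def algebra_simps)
  have "m * (norm sk)\<^sup>2 \<le> sk \<bullet> z"
    using strong[of "xk + sk" xk] by (simp add: z_def inner_commute)
  then have lower: "c / (c + 2) * m \<le> (sk \<bullet> y) / (sk \<bullet> sk)"
    using perturbed_secant_curvature_lower_bound[OF sk _ _ noise] c curv by (simp add: y_def)
  have "(norm z)\<^sup>2 \<le> M * (sk \<bullet> z)"
    using gradient_cocoercive[OF grad mono smooth \<open>0 < M\<close>, of "xk + sk" xk]
    by (simp add: z_def inner_commute)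
  then have upper: "(y \<bullet> y) / (sk \<bullet> y) \<le> c / (c - 2) * M"
    using perturbed_secant_ratio_upper_bound[OF sk c epsg _ _ noise] \<open>0 < M\<close> curv
    by (simp add: y_def)
  show ?thesis
    using lower upper by (simp add: y_def Let_def)
qed

end
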